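(* Consider the SWLME system $\partial_t U+\partial_x F(U)+B(U)\partial_x U=0$ in the conservative variables $U=(h,q,m_1,\dots,m_N)$ with $q=hu_m$, $m_i=h\alpha_i$, on the state space $h>0$, where $$F(U)=\Big(q,\ \frac{q^2}{h}+\frac g2h^2+\sum_{i=1}^N\frac{m_i^2}{(2i+1)h},\ \frac{2qm_1}{h},\dots,\frac{2qm_N}{h}\Big)^T,\quad B(U)=\mathrm{diag}(0,0,-u_m,\dots,-u_m),$$ and $g>0$. Let $A(U)=\frac{\partial F}{\partial U}(U)+B(U)$, with eigenvalues $\lambda_{1,2}=u_m\pm c$, $c=\sqrt{gh+\sum_{i=1}^N\frac{3\alpha_i^2}{2i+1}}$, and $\lambda_{i+2}=u_m$ ($i=1,\dots,N$). Then the characteristic fields associated with $\lambda_1$ and $\lambda_2$ are genuinely nonlinear, i.e. $\nabla_U\lambda_k(U)\cdot r_k(U)\neq 0$ for every $U$ with $h>0$ and every eigenvector $r_k$ of $A(U)$ for $\lambda_k$ ($k=1,2$), and the eigenvalue $u_m$ is linearly degenerate, i.e. $\nabla_U u_m\cdot r=0$ for every eigenvector $r$ of $A(U)$ associated with the eigenvalue $u_m$.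
   Context: SWLME = Shallow Water Linearized Moment Equations: $h$ water height, $u_m$ mean horizontal velocity, $\alpha_i$ coefficients of the vertical velocity profile expansion in Legendre-type basis functions, $g$ gravitational constant. Gradients are taken with respect to the conservative variables $(h,q,m_1,\dots,m_N)$, with $u_m=q/h$, $\alpha_i=m_i/h$. *)

theory Defs
  imports "HOL-Analysis.Analysis"
begin

text \<open>State vectors U = (h, q, m_1, ..., m_N) are represented as functions
  nat => real, using indices 0..N+1: U 0 = h, U 1 = q, U (i+1) = m_i (1 <= i <= N).
  Entries with index > N+1 are irrelevant.\<close>

definition swF :: "real \<Rightarrow> nat \<Rightarrow> (nat \<Rightarrow> real) \<Rightarrow> nat \<Rightarrow> real" where
  "swF g N U k =
     (if k = 0 then U 1
      else if k = 1 then (U 1)^2 / U 0 + g / 2 * (U 0)^2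
                         + (\<Sum>i=1..N. (U (i+1))^2 / ((2 * real i + 1) * U 0))
      else if k \<le> N + 1 then 2 * U 1 * U k / U 0
      else 0)"

definition swB :: "nat \<Rightarrow> (nat \<Rightarrow> real) \<Rightarrow> nat \<Rightarrow> nat \<Rightarrow> real" where
  "swB N U k j = (if k = j \<and> 2 \<le> k \<and> k \<le> N + 1 then - (U 1 / U 0) else 0)"

definition pderivU :: "((nat \<Rightarrow> real) \<Rightarrow> real) \<Rightarrow> (nat \<Rightarrow> real) \<Rightarrow> nat \<Rightarrow> real" where
  "pderivU f U j = deriv (\<lambda>t. f (U(j := t))) (U j)"

definition swA :: "real \<Rightarrow> nat \<Rightarrow> (nat \<Rightarrow> real) \<Rightarrow> nat \<Rightarrow> nat \<Rightarrow> real" where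
  "swA g N U k j = pderivU (\<lambda>V. swF g N V k) U j + swB N U k j"

definition um :: "(nat \<Rightarrow> real) \<Rightarrow> real" where
  "um U = U 1 / U 0"

definition swc :: "real \<Rightarrow> nat \<Rightarrow> (nat \<Rightarrow> real) \<Rightarrow> real" where
  "swc g N U = sqrt (g * U 0 + (\<Sum>i=1..N. 3 * (U (i+1) / U 0)^2 / (2 * real i + 1)))"

definition lam1 :: "real \<Rightarrow> nat \<Rightarrow> (nat \<Rightarrow> real) \<Rightarrow> real" where
  "lam1 g N U = um U - swc g N U"

definition lam2 :: "real \<Rightarrow> nat \<Rightarrow> (nat \<Rightarrow> real) \<Rightarrow> real" where
  "lam2 g N U = um U + swc g N U"

definition is_eigvec :: "real \<Rightarrow> nat \<Rightarrow> (nat \<Rightarrow> real) \<Rightarrow> real \<Rightarrow> (nat \<Rightarrow> real) \<Rightarrow> bool" where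
  "is_eigvec g N U lam r \<longleftrightarrow>
     (\<exists>j\<le>N+1. r j \<noteq> 0) \<and>
     (\<forall>k\<le>N+1. (\<Sum>j\<le>N+1. swA g N U k j * r j) = lam * r k)"

definition grad_dot :: "nat \<Rightarrow> ((nat \<Rightarrow> real) \<Rightarrow> real) \<Rightarrow> (nat \<Rightarrow> real) \<Rightarrow> (nat \<Rightarrow> real) \<Rightarrow> real" where
  "grad_dot N f U r = (\<Sum>j\<le>N+1. pderivU f U j * r j)"

end

theory Submission
  imports Defs
begin

text \<open>Write c^2 = g h + Q with Q = \<Sum> 3 \<alpha>_i^2 / (2i+1). The first row of A(U) gives
  r_1 = \<lambda> r_0 for every eigenvector, and for \<lambda> \<noteq> u_m the moment rows force
  r = r_0 (1, \<lambda>, 2 \<alpha>_1, ..., 2 \<alpha>_N) with r_0 \<noteq> 0. Along such r one finds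
  \<nabla>u_m \<cdot> r = (r_1 - u_m r_0) / h and \<nabla>(c^2) \<cdot> r = (g + 2 Q / h) r_0, so for \<lambda> = u_m \<plusminus> c
  \<nabla>\<lambda> \<cdot> r = \<plusminus> r_0 (c / h + (g + 2 Q / h) / (2 c)), which cannot vanish. For \<lambda> = u_m the
  first row alone gives \<nabla>u_m \<cdot> r = (r_1 - u_m r_0) / h = 0.\<close>

lemma pderivU_eqI:
  "((\<lambda>t. f (U(j := t))) has_real_derivative D) (at (U j)) \<Longrightarrow> pderivU f U j = D"
  unfolding pderivU_def by (rule DERIV_imp_deriv)

lemma sum_atMost_Suc_split:
  fixes f :: "nat \<Rightarrow> 'a::comm_monoid_add"
  shows "(\<Sum>j\<le>N+1. f j) = f 0 + f 1 + (\<Sum>i=1..N. f (i+1))"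
proof -
  have "(\<Sum>j\<le>N+1. f j) = f 0 + (\<Sum>i=0..N. f (i+1))"
    by (simp add: sum.atMost_Suc_shift atLeast0AtMost del: sum.atMost_Suc)
  also have "\<dots> = f 0 + f 1 + (\<Sum>i=1..N. f (i+1))"
    by (subst sum.atLeast_Suc_atMost) (auto simp: add.assoc)
  finally show ?thesis .
qed

definition moment_energy :: "nat \<Rightarrow> (nat \<Rightarrow> real) \<Rightarrow> real" where
  "moment_energy N U = (\<Sum>i=1..N. 3 * (U (i+1) / U 0)^2 / (2 * real i + 1))"

lemma swc_eq: "swc g N U = sqrt (g * U 0 + moment_energy N U)"
  unfolding swc_def moment_energy_def ..

lemma moment_energy_nonneg: "moment_energy N U \<ge> 0"
  unfolding moment_energy_def by (intro sum_nonneg) auto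

lemma moment_energy_eq_div:
  "moment_energy N U = (\<Sum>i=1..N. 3 * (U (i+1))^2 / (2 * real i + 1)) / (U 0)^2"
  unfolding moment_energy_def sum_divide_distrib
  by (intro sum.cong) (auto simp: power_divide)

lemma moment_energy_has_derivative_h:
  assumes "U 0 > 0"
  shows "((\<lambda>t. moment_energy N (U(0 := t))) has_real_derivative - 2 * moment_energy N U / U 0)
           (at (U 0))"
proof -
  define M where "M = (\<Sum>i=1..N. 3 * (U (i+1))^2 / (2 * real i + 1))"
  have "(\<lambda>t. moment_energy N (U(0 := t))) = (\<lambda>t. M / t^2)"
    unfolding moment_energy_eq_div M_def by auto
  moreover have "((\<lambda>t. M / t^2) has_real_derivative - 2 * (M / (U 0)^2) / U 0) (at (U 0))"
    using assms by (auto intro!: derivative_eq_intros simp: field_simps power2_eq_square)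
  ultimately show ?thesis
    unfolding moment_energy_eq_div M_def by simp
qed

lemma moment_energy_has_derivative_moment:
  assumes "U 0 > 0" "2 \<le> k" "k \<le> N+1"
  shows "((\<lambda>t. moment_energy N (U(k := t))) has_real_derivative
           6 * U k / ((U 0)^2 * (2 * real (k-1) + 1))) (at (U k))"
proof -
  have summand: "((\<lambda>t. 3 * ((U(k := t)) (i+1) / (U(k := t)) 0)^2 / (2 * real i + 1))
      has_real_derivative
      (if i = k - 1 then 6 * U k / ((U 0)^2 * (2 * real (k-1) + 1)) else 0)) (at (U k))" for i
  proof (cases "i = k - 1")
    case True
    then have "(\<lambda>t. 3 * ((U(k := t)) (i+1) / (U(k := t)) 0)^2 / (2 * real i + 1))
        = (\<lambda>t. 3 * (t / U 0)^2 / (2 * real (k-1) + 1))"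
      using assms by auto
    moreover have "((\<lambda>t. 3 * (t / U 0)^2 / (2 * real (k-1) + 1)) has_real_derivative
        6 * U k / ((U 0)^2 * (2 * real (k-1) + 1))) (at (U k))"
      using assms by (auto intro!: derivative_eq_intros simp: power2_eq_square)
    ultimately show ?thesis using True by simp
  next
    case False
    moreover have "i + 1 \<noteq> k" "k \<noteq> 0" using False assms by auto
    ultimately show ?thesis by simp
  qed
  have "((\<lambda>t. moment_energy N (U(k := t))) has_real_derivative
      (\<Sum>i\<in>{1..N}. if i = k - 1 then 6 * U k / ((U 0)^2 * (2 * real (k-1) + 1)) else 0))
      (at (U k))"
    unfolding moment_energy_def by (rule DERIV_sum) (rule summand)
  moreover have "k - 1 \<in> {1..N}" using assms by auto
  ultimately show ?thesis by simp
qed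

lemma moment_energy_has_derivative_other:
  assumes "j \<noteq> 0" "\<not> (2 \<le> j \<and> j \<le> N+1)"
  shows "((\<lambda>t. moment_energy N (U(j := t))) has_real_derivative 0) (at (U j))"
proof -
  have "(\<lambda>t. moment_energy N (U(j := t))) = (\<lambda>t. moment_energy N U)"
    unfolding moment_energy_def using assms by (intro ext sum.cong) auto
  then show ?thesis by simp
qed

definition celerity_sq_partial :: "real \<Rightarrow> nat \<Rightarrow> (nat \<Rightarrow> real) \<Rightarrow> nat \<Rightarrow> real" where
  "celerity_sq_partial g N U j =
     (if j = 0 then g - 2 * moment_energy N U / U 0
      else if 2 \<le> j \<and> j \<le> N+1 then 6 * U j / ((U 0)^2 * (2 * real (j-1) + 1))
      else 0)"

lemma celerity_sq_has_partial:
  assumes "U 0 > 0"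
  shows "((\<lambda>t. g * (U(j := t)) 0 + moment_energy N (U(j := t))) has_real_derivative
           celerity_sq_partial g N U j) (at (U j))"
proof -
  consider "j = 0" | "2 \<le> j \<and> j \<le> N+1" | "j \<noteq> 0" "\<not> (2 \<le> j \<and> j \<le> N+1)" by blast
  then show ?thesis
  proof cases
    case 1
    then show ?thesis unfolding celerity_sq_partial_def
      using DERIV_add[OF DERIV_cmult[OF DERIV_ident] moment_energy_has_derivative_h[of U N, OF assms]]
      by simp
  next
    case 2
    then show ?thesis unfolding celerity_sq_partial_def
      using DERIV_add[OF DERIV_const moment_energy_has_derivative_moment[of U j N, OF assms]]
      by auto
  next
    case 3
    then show ?thesis unfolding celerity_sq_partial_def
      using DERIV_add[OF DERIV_const moment_energy_has_derivative_other] by auto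
  qed
qed

definition um_partial :: "(nat \<Rightarrow> real) \<Rightarrow> nat \<Rightarrow> real" where
  "um_partial U j = (if j = 0 then - U 1 / (U 0)^2 else if j = 1 then 1 / U 0 else 0)"

lemma um_has_partial:
  assumes "U 0 > 0"
  shows "((\<lambda>t. um (U(j := t))) has_real_derivative um_partial U j) (at (U j))"
  using assms unfolding um_def um_partial_def
  by (cases "j = 0"; cases "j = 1") (auto intro!: derivative_eq_intros simp: power2_eq_square)

lemma pderivU_um: "U 0 > 0 \<Longrightarrow> pderivU um U j = um_partial U j"
  by (rule pderivU_eqI) (rule um_has_partial)

lemma pderivU_um_plus_swc:
  assumes "g > 0" "U 0 > 0"
  shows "pderivU (\<lambda>V. um V + s * swc g N V) U j
           = um_partial U j + s * celerity_sq_partial g N U j / (2 * swc g N U)"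
proof (rule pderivU_eqI)
  have pos: "g * U 0 + moment_energy N U > 0"
    using assms moment_energy_nonneg[of N U] by (simp add: add_pos_nonneg)
  have "((\<lambda>t. um (U(j := t)) + s * sqrt (g * (U(j := t)) 0 + moment_energy N (U(j := t))))
          has_real_derivative um_partial U j
            + s * (inverse (sqrt (g * U 0 + moment_energy N U)) / 2 * celerity_sq_partial g N U j))
        (at (U j))"
    using DERIV_real_sqrt[OF pos] um_has_partial[of U, OF assms(2)] celerity_sq_has_partial[of U, OF assms(2)]
    by (intro DERIV_add DERIV_cmult DERIV_chain2[where f = sqrt]) auto
  then show "((\<lambda>t. um (U(j := t)) + s * swc g N (U(j := t))) has_real_derivative
      um_partial U j + s * celerity_sq_partial g N U j / (2 * swc g N U)) (at (U j))"
    unfolding swc_eq by (simp add: field_simps)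
qed

lemma um_partial_dot: "(\<Sum>j\<le>N+1. um_partial U j * r j) = (r 1 - um U * r 0) / U 0"
  unfolding sum_atMost_Suc_split um_partial_def um_def
  by (simp add: power2_eq_square diff_divide_distrib)

lemma swA_mass_row: "swA g N U 0 j = (if j = 1 then 1 else 0)"
proof -
  have "pderivU (\<lambda>V. swF g N V 0) U j = (if j = 1 then 1 else 0)"
    by (rule pderivU_eqI, unfold swF_def, cases "j = 1") (auto intro!: derivative_eq_intros)
  then show ?thesis unfolding swA_def swB_def by simp
qed

lemma swA_moment_row:
  assumes "U 0 > 0" "2 \<le> k" "k \<le> N+1"
  shows "swA g N U k j =
           (if j = 0 then - 2 * U 1 * U k / (U 0)^2 else if j = 1 then 2 * U k / U 0
            else if j = k then U 1 / U 0 else 0)"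
proof -
  have "(\<lambda>t. swF g N (U(j := t)) k) = (\<lambda>t. 2 * (U(j := t)) 1 * (U(j := t)) k / (U(j := t)) 0)"
    unfolding swF_def using assms by (intro ext) auto
  moreover have "((\<lambda>t. 2 * (U(j := t)) 1 * (U(j := t)) k / (U(j := t)) 0) has_real_derivative
      (if j = 0 then - 2 * U 1 * U k / (U 0)^2 else if j = 1 then 2 * U k / U 0
       else if j = k then 2 * U 1 / U 0 else 0)) (at (U j))"
    using assms
    by (cases "j = 0"; cases "j = 1"; cases "j = k")
       (auto intro!: derivative_eq_intros simp: power2_eq_square)
  ultimately show ?thesis
    unfolding swA_def swB_def using assms pderivU_eqI[where f = "\<lambda>V. swF g N V k"] by auto
qed

lemma eigvec_mass_row:
  assumes "is_eigvec g N U lam r"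
  shows "r 1 = lam * r 0"
proof -
  have "(\<Sum>j\<le>N+1. swA g N U 0 j * r j) = r 1"
    unfolding swA_mass_row sum_atMost_Suc_split by simp
  then show ?thesis using assms unfolding is_eigvec_def by auto
qed

lemma eigvec_moment_row:
  assumes "U 0 > 0" "2 \<le> k" "k \<le> N+1" "is_eigvec g N U lam r"
  shows "(lam - um U) * r k = (lam - um U) * (2 * U k / U 0 * r 0)"
proof -
  have "(\<Sum>j\<le>N+1. swA g N U k j * r j)
      = (\<Sum>j\<le>N+1. (if j = 0 then - 2 * U 1 * U k / (U 0)^2 * r 0 else 0)
          + (if j = 1 then 2 * U k / U 0 * r 1 else 0) + (if j = k then U 1 / U 0 * r k else 0))"
    using assms(2,3) by (intro sum.cong) (auto simp: swA_moment_row[of U k N, OF assms(1-3)])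
  also have "\<dots> = - 2 * U 1 * U k / (U 0)^2 * r 0 + 2 * U k / U 0 * r 1 + U 1 / U 0 * r k"
    using assms(2,3) by (simp add: sum.distrib)
  finally have row: "- 2 * U 1 * U k / (U 0)^2 * r 0 + 2 * U k / U 0 * (lam * r 0) + U 1 / U 0 * r k
      = lam * r k"
    using assms eigvec_mass_row[OF assms(4)] unfolding is_eigvec_def by auto
  have "(lam - um U) * r k = 2 * U k / U 0 * (lam * r 0) - 2 * U 1 * U k / (U 0)^2 * r 0"
    using row unfolding um_def by (simp add: algebra_simps)
  also have "\<dots> = (lam - um U) * (2 * U k / U 0 * r 0)"
    unfolding um_def using assms(1) by (simp add: field_simps power2_eq_square)
  finally show ?thesis .
qed

lemma eigvec_acoustic:
  assumes "U 0 > 0" "lam \<noteq> um U" "is_eigvec g N U lam r"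
  shows "r 1 = lam * r 0" "\<And>k. 2 \<le> k \<Longrightarrow> k \<le> N+1 \<Longrightarrow> r k = 2 * U k / U 0 * r 0" "r 0 \<noteq> 0"
proof -
  show r1: "r 1 = lam * r 0" by (rule eigvec_mass_row[OF assms(3)])
  show rk: "r k = 2 * U k / U 0 * r 0" if "2 \<le> k" "k \<le> N+1" for k
    using eigvec_moment_row[OF assms(1) that assms(3)] assms(2)
    by (subst (asm) mult_left_cancel) auto
  show "r 0 \<noteq> 0"
  proof
    assume "r 0 = 0"
    then have "r j = 0" if "j \<le> N+1" for j
      using r1 rk that by (cases "j \<le> 1") (auto simp: le_Suc_eq)
    then show False using assms(3) unfolding is_eigvec_def by auto
  qed
qed

lemma celerity_sq_partial_dot_acoustic:
  assumes "U 0 > 0" "\<And>k. 2 \<le> k \<Longrightarrow> k \<le> N+1 \<Longrightarrow> r k = 2 * U k / U 0 * r 0"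
  shows "(\<Sum>j\<le>N+1. celerity_sq_partial g N U j * r j) = (g + 2 * moment_energy N U / U 0) * r 0"
proof -
  have "(\<Sum>i=1..N. celerity_sq_partial g N U (i+1) * r (i+1))
      = (\<Sum>i=1..N. 4 * r 0 / U 0 * (3 * (U (i+1) / U 0)^2 / (2 * real i + 1)))"
  proof (rule sum.cong[OF refl])
    fix i assume i: "i \<in> {1..N}"
    then have r: "r (i+1) = 2 * U (i+1) / U 0 * r 0" using assms(2) by auto
    show "celerity_sq_partial g N U (i+1) * r (i+1)
        = 4 * r 0 / U 0 * (3 * (U (i+1) / U 0)^2 / (2 * real i + 1))"
      using i assms(1) unfolding r celerity_sq_partial_def
      by (auto simp: field_simps power2_eq_square)
  qed
  also have "\<dots> = 4 * r 0 / U 0 * moment_energy N U"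
    unfolding moment_energy_def sum_distrib_left ..
  finally show ?thesis
    unfolding sum_atMost_Suc_split using assms(1)
    by (simp add: celerity_sq_partial_def field_simps)
qed

lemma grad_dot_acoustic_nonzero:
  assumes g: "g > 0" and h: "U 0 > 0" and "s \<noteq> 0"
    and eig: "is_eigvec g N U (um U + s * swc g N U) r"
  shows "grad_dot N (\<lambda>V. um V + s * swc g N V) U r \<noteq> 0"
proof -
  define c where "c = swc g N U"
  define Q where "Q = moment_energy N U"
  have "g * U 0 + Q > 0"
    using g h moment_energy_nonneg[of N U] unfolding Q_def by (simp add: add_pos_nonneg)
  then have c_pos: "c > 0" unfolding c_def Q_def swc_eq by simp
  have "Q \<ge> 0" unfolding Q_def by (rule moment_energy_nonneg)
  have "um U + s * c \<noteq> um U" using c_pos \<open>s \<noteq> 0\<close> by simp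
  note r = eigvec_acoustic[OF h this eig[folded c_def]]
  have "(\<Sum>j\<le>N+1. celerity_sq_partial g N U j * r j) = (g + 2 * Q / U 0) * r 0"
    unfolding Q_def using h r(2) by (rule celerity_sq_partial_dot_acoustic)
  have "grad_dot N (\<lambda>V. um V + s * swc g N V) U r
      = (\<Sum>j\<le>N+1. um_partial U j * r j)
        + s / (2 * c) * (\<Sum>j\<le>N+1. celerity_sq_partial g N U j * r j)"
    unfolding grad_dot_def pderivU_um_plus_swc[of g U, OF g h] c_def
    by (simp add: sum.distrib sum_distrib_left algebra_simps)
  also have "\<dots> = s * c * r 0 / U 0 + s / (2 * c) * ((g + 2 * Q / U 0) * r 0)"
    unfolding um_partial_dot \<open>(\<Sum>j\<le>N+1. celerity_sq_partial g N U j * r j) = _\<close> r(1)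
    using c_pos h by (simp add: field_simps)
  also have "\<dots> = s * r 0 * (c / U 0 + (g + 2 * Q / U 0) / (2 * c))"
    using c_pos h by (simp add: field_simps)
  moreover have "c / U 0 + (g + 2 * Q / U 0) / (2 * c) > 0"
    using c_pos h g \<open>Q \<ge> 0\<close> by (intro add_pos_pos divide_pos_pos add_pos_nonneg) auto
  ultimately show ?thesis
    using \<open>s \<noteq> 0\<close> r(3) by simp
qed

theorem mainTheorem2:
  fixes g :: real and N :: nat and U :: "nat \<Rightarrow> real"
  assumes "g > 0" and "U 0 > 0"
  shows "(\<forall>r. is_eigvec g N U (lam1 g N U) r \<longrightarrow> grad_dot N (lam1 g N) U r \<noteq> 0)
       \<and> (\<forall>r. is_eigvec g N U (lam2 g N U) r \<longrightarrow> grad_dot N (lam2 g N) U r \<noteq> 0)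
       \<and> (\<forall>r. is_eigvec g N U (um U) r \<longrightarrow> grad_dot N um U r = 0)"
proof (intro conjI allI impI)
  have "lam1 g N = (\<lambda>V. um V + (-1) * swc g N V)" "lam2 g N = (\<lambda>V. um V + 1 * swc g N V)"
    by (auto simp: lam1_def lam2_def)
  note lam_eqs = this this[THEN fun_cong]
  fix r
  show "is_eigvec g N U (lam1 g N U) r \<Longrightarrow> grad_dot N (lam1 g N) U r \<noteq> 0"
    using grad_dot_acoustic_nonzero[where U = U and s = "-1", OF assms] unfolding lam_eqs by simp
  show "is_eigvec g N U (lam2 g N U) r \<Longrightarrow> grad_dot N (lam2 g N) U r \<noteq> 0"
    using grad_dot_acoustic_nonzero[where U = U and s = 1, OF assms] unfolding lam_eqs by simp
  assume "is_eigvec g N U (um U) r"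
  then have "r 1 = um U * r 0" by (rule eigvec_mass_row)
  then show "grad_dot N um U r = 0"
    unfolding grad_dot_def pderivU_um[of U, OF assms(2)] um_partial_dot by simp
qed

end
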